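(* (i) If $\alpha=\beta=0$, then $z_\alpha=z_\beta=1$; in particular $x_{\rm lavs}(h_1,h_2)=x_{\rm peak}(h_1,h_2)$ and $x_{\rm gloom}(h_1,h_2)=x_{\rm valy}(h_1,h_2)$. As $\alpha\to1/\delta$, $z_\alpha\to0$; as $\beta\to+\infty$, $z_\beta\to+\infty$. (ii) For fixed $h_1\ge h_2>0$ (and all other parameters fixed), as the risk-aversion parameter $\gamma\to\infty$, $$\lim_{\gamma\to\infty}\frac{x_{\rm lavs}(h_1,h_2)}{c^*(x_{\rm lavs}(h_1,h_2),h_1,h_2)}=\lim_{\gamma\to\infty}\frac{x_{\rm gloom}(h_1,h_2)}{c^*(x_{\rm gloom}(h_1,h_2),h_1,h_2)}=\frac1r.$$
   Context: Parameters: $r>0$, $\mu>0$, $\sigma>0$, $\kappa=(\mu-r)/\sigma$, $\delta>0$, $\gamma>0,\gamma\ne1$, $0\le\alpha\le1/\delta$, $\beta\ge0$, $K_0:=r+\frac{\delta-r}{\gamma}+\frac{\gamma-1}{2\gamma^2}\kappa^2>0$. $\gamma^*=-(1-\gamma)/\gamma$; $m_1>1$ and $m_2<\min(\gamma^*,0)$ are the roots of $\frac{\kappa^2}{2}m^2+(\delta-r-\frac{\kappa^2}{2})m-\delta=0$; $z_\alpha\in(0,1-\alpha\delta]$ solves $\frac{2}{\kappa^2m_1(m_1-1)}z^{m_1}+\frac{z}{r}(m_2-1)+m_2(\alpha-\frac1\delta)=0$; $z_\beta\in[1+\beta\delta,\infty)$ solves $\frac{2}{\kappa^2m_2(m_2-1)}z^{m_2}+\frac{z}{r}(m_1-1)-m_1(\beta+\frac1\delta)=0$.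 Coefficients: $C_5(h_2)=\frac{1-\gamma^*}{(m_1-m_2)(m_1-\gamma^* )}\big(\frac{m_2(\beta\delta+1)}{\delta}z_\beta^{-m_1}+\frac{1-m_2}{r}z_\beta^{1-m_1}\big)h_2^{1+\gamma(m_1-1)}$; $C_3(h_2)=C_5(h_2)+\frac{2(\gamma^*-1)}{\kappa^2(m_1-m_2)m_1(m_1-1)(m_1-\gamma^* )}h_2^{1+\gamma(m_1-1)}$; $C_1(h_1,h_2)=C_3(h_2)+\frac{2(1-\gamma^* )}{\kappa^2(m_1-m_2)m_1(m_1-1)(m_1-\gamma^* )}h_1^{1+\gamma(m_1-1)}$; $C_2(h_1)=\frac{1-\gamma^*}{(m_1-m_2)(m_2-\gamma^* )}\big(\frac{m_1(\alpha\delta-1)}{\delta}z_\alpha^{-m_2}+\frac{m_1-1}{r}z_\alpha^{1-m_2}\big)h_1^{1+\gamma(m_2-1)}$; $C_4(h_1)=C_2(h_1)-\frac{2(\gamma^*-1)}{\kappa^2(m_1-m_2)m_2(m_2-1)(m_2-\gamma^* )}h_1^{1+\gamma(m_2-1)}$; $C_6(h_1,h_2)=C_4(h_1)-\frac{2(1-\gamma^* )}{\kappa^2(m_1-m_2)m_2(m_2-1)(m_2-\gamma^* )}h_2^{1+\gamma(m_2-1)}$. Boundary curves: $x_{\rm lavs}=-m_1C_1(h_1,h_2)(z_\alpha h_1^{-\gamma})^{m_1-1}-m_2C_2(h_1)(z_\alpha h_1^{-\gamma})^{m_2-1}+\frac{h_1}{r}$; $x_{\rm peak}=-m_1C_1(h_1,h_2)(h_1^{-\gamma})^{m_1-1}-m_2C_2(h_1)(h_1^{-\gamma})^{m_2-1}+\frac{h_1}{r}$;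 $x_{\rm valy}=-m_1C_5(h_2)(h_2^{-\gamma})^{m_1-1}-m_2C_6(h_1,h_2)(h_2^{-\gamma})^{m_2-1}+\frac{h_2}{r}$; $x_{\rm gloom}=-m_1C_5(h_2)(z_\beta h_2^{-\gamma})^{m_1-1}-m_2C_6(h_1,h_2)(z_\beta h_2^{-\gamma})^{m_2-1}+\frac{h_2}{r}$. The optimal feedback consumption $c^*(x,h_1,h_2)$ (for the problem of maximizing $\mathbb E[\int_0^\infty e^{-\delta t}(U(c_t)dt-\alpha dV^+_{1t}-\beta dV^-_{2t})]$ with $U=V=x^{1-\gamma}/(1-\gamma)$, $V^+_{1t}=V(h_1\vee\sup_{s\le t}c_s)-V(h_1)$, $V^-_{2t}=V(h_2)-V(h_2\wedge\inf_{s\le t}c_s)$, over consumption/investment strategies with wealth $dX=(rX+(\mu-r)\pi-c)dt+\sigma\pi dW$, $X\ge0$) satisfies $c^*(x,h_1,h_2)=h_1$ for $x_{\rm peak}<x\le x_{\rm lavs}$ and $c^*(x,h_1,h_2)=h_2$ for $x_{\rm gloom}\le x<x_{\rm valy}$. *)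

theory Defs
  imports "HOL-Analysis.Analysis"
begin

text \<open>Market parameters: r (interest), mu (drift), sig (volatility sigma), delta (discount).\<close>

definition kap :: "real \<Rightarrow> real \<Rightarrow> real \<Rightarrow> real" where
  "kap r mu sig = (mu - r) / sig"

definition gstar :: "real \<Rightarrow> real" where
  "gstar gamma = - (1 - gamma) / gamma"

definition K0 :: "real \<Rightarrow> real \<Rightarrow> real \<Rightarrow> real \<Rightarrow> real \<Rightarrow> real" where
  "K0 r mu sig delta gamma =
     r + (delta - r) / gamma + (gamma - 1) / (2 * gamma\<^sup>2) * (kap r mu sig)\<^sup>2"

definition charpoly :: "real \<Rightarrow> real \<Rightarrow> real \<Rightarrow> real \<Rightarrow> real \<Rightarrow> real" where
  "charpoly r mu sig delta m =
     (kap r mu sig)\<^sup>2 / 2 * m\<^sup>2 + (delta - r - (kap r mu sig)\<^sup>2 / 2) * m - delta"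

definition m1 :: "real \<Rightarrow> real \<Rightarrow> real \<Rightarrow> real \<Rightarrow> real" where
  "m1 r mu sig delta = (THE m. m > 1 \<and> charpoly r mu sig delta m = 0)"

definition m2 :: "real \<Rightarrow> real \<Rightarrow> real \<Rightarrow> real \<Rightarrow> real" where
  "m2 r mu sig delta = (THE m. m < 0 \<and> charpoly r mu sig delta m = 0)"

definition zal :: "real \<Rightarrow> real \<Rightarrow> real \<Rightarrow> real \<Rightarrow> real \<Rightarrow> real" where
  "zal r mu sig delta alpha =
    (let k = kap r mu sig; a = m1 r mu sig delta; b = m2 r mu sig delta in
     THE z. 0 < z \<and> z \<le> 1 - alpha * delta \<and>
       2 / (k\<^sup>2 * a * (a - 1)) * z powr a + z / r * (b - 1) + b * (alpha - 1 / delta) = 0)"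

definition zbe :: "real \<Rightarrow> real \<Rightarrow> real \<Rightarrow> real \<Rightarrow> real \<Rightarrow> real" where
  "zbe r mu sig delta beta =
    (let k = kap r mu sig; a = m1 r mu sig delta; b = m2 r mu sig delta in
     THE z. 1 + beta * delta \<le> z \<and>
       2 / (k\<^sup>2 * b * (b - 1)) * z powr b + z / r * (a - 1) - a * (beta + 1 / delta) = 0)"

definition C5 :: "real \<Rightarrow> real \<Rightarrow> real \<Rightarrow> real \<Rightarrow> real \<Rightarrow> real \<Rightarrow> real \<Rightarrow> real" where
  "C5 r mu sig delta gamma beta h2 =
    (let a = m1 r mu sig delta; b = m2 r mu sig delta; g = gstar gamma;
         zb = zbe r mu sig delta beta in
     (1 - g) / ((a - b) * (a - g)) *
       (b * (beta * delta + 1) / delta * zb powr (- a) + (1 - b) / r * zb powr (1 - a)) *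
       h2 powr (1 + gamma * (a - 1)))"

definition C3 :: "real \<Rightarrow> real \<Rightarrow> real \<Rightarrow> real \<Rightarrow> real \<Rightarrow> real \<Rightarrow> real \<Rightarrow> real" where
  "C3 r mu sig delta gamma beta h2 =
    (let k = kap r mu sig; a = m1 r mu sig delta; b = m2 r mu sig delta; g = gstar gamma in
     C5 r mu sig delta gamma beta h2
     + 2 * (g - 1) / (k\<^sup>2 * (a - b) * a * (a - 1) * (a - g)) * h2 powr (1 + gamma * (a - 1)))"

definition C1 :: "real \<Rightarrow> real \<Rightarrow> real \<Rightarrow> real \<Rightarrow> real \<Rightarrow> real \<Rightarrow> real \<Rightarrow> real \<Rightarrow> real" where
  "C1 r mu sig delta gamma beta h1 h2 =
    (let k = kap r mu sig; a = m1 r mu sig delta; b = m2 r mu sig delta; g = gstar gamma in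
     C3 r mu sig delta gamma beta h2
     + 2 * (1 - g) / (k\<^sup>2 * (a - b) * a * (a - 1) * (a - g)) * h1 powr (1 + gamma * (a - 1)))"

definition C2 :: "real \<Rightarrow> real \<Rightarrow> real \<Rightarrow> real \<Rightarrow> real \<Rightarrow> real \<Rightarrow> real \<Rightarrow> real" where
  "C2 r mu sig delta gamma alpha h1 =
    (let a = m1 r mu sig delta; b = m2 r mu sig delta; g = gstar gamma;
         za = zal r mu sig delta alpha in
     (1 - g) / ((a - b) * (b - g)) *
       (a * (alpha * delta - 1) / delta * za powr (- b) + (a - 1) / r * za powr (1 - b)) *
       h1 powr (1 + gamma * (b - 1)))"

definition C4 :: "real \<Rightarrow> real \<Rightarrow> real \<Rightarrow> real \<Rightarrow> real \<Rightarrow> real \<Rightarrow> real \<Rightarrow> real" where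
  "C4 r mu sig delta gamma alpha h1 =
    (let k = kap r mu sig; a = m1 r mu sig delta; b = m2 r mu sig delta; g = gstar gamma in
     C2 r mu sig delta gamma alpha h1
     - 2 * (g - 1) / (k\<^sup>2 * (a - b) * b * (b - 1) * (b - g)) * h1 powr (1 + gamma * (b - 1)))"

definition C6 :: "real \<Rightarrow> real \<Rightarrow> real \<Rightarrow> real \<Rightarrow> real \<Rightarrow> real \<Rightarrow> real \<Rightarrow> real \<Rightarrow> real" where
  "C6 r mu sig delta gamma alpha h1 h2 =
    (let k = kap r mu sig; a = m1 r mu sig delta; b = m2 r mu sig delta; g = gstar gamma in
     C4 r mu sig delta gamma alpha h1
     - 2 * (1 - g) / (k\<^sup>2 * (a - b) * b * (b - 1) * (b - g)) * h2 powr (1 + gamma * (b - 1)))"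

definition x_lavs :: "real \<Rightarrow> real \<Rightarrow> real \<Rightarrow> real \<Rightarrow> real \<Rightarrow> real \<Rightarrow> real \<Rightarrow> real \<Rightarrow> real \<Rightarrow> real" where
  "x_lavs r mu sig delta gamma alpha beta h1 h2 =
    (let a = m1 r mu sig delta; b = m2 r mu sig delta; za = zal r mu sig delta alpha in
     - a * C1 r mu sig delta gamma beta h1 h2 * (za * h1 powr (- gamma)) powr (a - 1)
     - b * C2 r mu sig delta gamma alpha h1 * (za * h1 powr (- gamma)) powr (b - 1)
     + h1 / r)"

definition x_peak :: "real \<Rightarrow> real \<Rightarrow> real \<Rightarrow> real \<Rightarrow> real \<Rightarrow> real \<Rightarrow> real \<Rightarrow> real \<Rightarrow> real \<Rightarrow> real" where
  "x_peak r mu sig delta gamma alpha beta h1 h2 =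
    (let a = m1 r mu sig delta; b = m2 r mu sig delta in
     - a * C1 r mu sig delta gamma beta h1 h2 * (h1 powr (- gamma)) powr (a - 1)
     - b * C2 r mu sig delta gamma alpha h1 * (h1 powr (- gamma)) powr (b - 1)
     + h1 / r)"

definition x_valy :: "real \<Rightarrow> real \<Rightarrow> real \<Rightarrow> real \<Rightarrow> real \<Rightarrow> real \<Rightarrow> real \<Rightarrow> real \<Rightarrow> real \<Rightarrow> real" where
  "x_valy r mu sig delta gamma alpha beta h1 h2 =
    (let a = m1 r mu sig delta; b = m2 r mu sig delta in
     - a * C5 r mu sig delta gamma beta h2 * (h2 powr (- gamma)) powr (a - 1)
     - b * C6 r mu sig delta gamma alpha h1 h2 * (h2 powr (- gamma)) powr (b - 1)
     + h2 / r)"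

definition x_gloom :: "real \<Rightarrow> real \<Rightarrow> real \<Rightarrow> real \<Rightarrow> real \<Rightarrow> real \<Rightarrow> real \<Rightarrow> real \<Rightarrow> real \<Rightarrow> real" where
  "x_gloom r mu sig delta gamma alpha beta h1 h2 =
    (let a = m1 r mu sig delta; b = m2 r mu sig delta; zb = zbe r mu sig delta beta in
     - a * C5 r mu sig delta gamma beta h2 * (zb * h2 powr (- gamma)) powr (a - 1)
     - b * C6 r mu sig delta gamma alpha h1 h2 * (zb * h2 powr (- gamma)) powr (b - 1)
     + h2 / r)"

end

theory Submission
  imports Defs "HOL-Real_Asymp.Real_Asymp"
begin

text \<open>
Write a = m1, b = m2 and c = kappa^2/2. Factoring the characteristic polynomial as
c (m - a) (m - b) gives r = -c (a - 1) (b - 1) and delta = -c a b, and with these relations the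
equations defining z_alpha and z_beta become
  z^a - a z + (a - 1) (1 - alpha delta) = 0   and   z^b - b z + (b - 1) (1 + beta delta) = 0.
Since z^e - e z is strictly monotone on (0, 1] for e > 1 and on [1, oo) for e < 0, each has
exactly one root in the prescribed range, and for alpha = beta = 0 that root is 1.

As gamma -> oo we have gamma* = 1 - 1/gamma -> 1, and every coefficient C_i carries a factor
1 - gamma*. What multiplies it in x_lavs and x_gloom are terms
  h^(1 + gamma (m - 1)) (z u^(-gamma))^(m - 1) = z^(m - 1) h (h/u)^(gamma (m - 1)),
which stay bounded because h2 <= h1. This holds whatever the values of z_alpha and z_beta,
so the limits need no hypothesis on alpha and beta; at alpha = 1/delta the description
defining z_alpha is empty and its value is unspecified.
\<close>

lemma quadratic_factor_opposite_roots:
  fixes c e d :: real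
  assumes c: "0 < c" and d: "0 < d" and neg_at_1: "c + e < d"
  obtains x y where "1 < x" "y < 0" "\<And>m. c * m\<^sup>2 + e * m - d = c * (m - x) * (m - y)"
proof
  define s where "s = sqrt (e\<^sup>2 + 4 * c * d)"
  have s2: "s\<^sup>2 = e\<^sup>2 + 4 * c * d" unfolding s_def using c d by simp
  have "\<bar>e\<bar> < s" unfolding s_def using c d by (intro real_less_rsqrt) simp
  show "(- e - s) / (2 * c) < 0" using \<open>\<bar>e\<bar> < s\<close> c by (intro divide_neg_pos) auto
  have "2 * c + e < s"
  proof (cases "2 * c + e \<le> 0")
    case False
    have "c * (c + e) < c * d" using c neg_at_1 by simp
    then have "(2 * c + e)\<^sup>2 < e\<^sup>2 + 4 * c * d"
      by (simp add: power2_eq_square algebra_simps)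
    then show ?thesis unfolding s_def by (rule real_less_rsqrt)
  qed (use \<open>\<bar>e\<bar> < s\<close> in linarith)
  then show "1 < (s - e) / (2 * c)" using c by simp
  show "c * m\<^sup>2 + e * m - d = c * (m - (s - e) / (2 * c)) * (m - (- e - s) / (2 * c))" for m
    using c s2 by (simp add: field_simps power2_eq_square)
qed

lemma charpoly_roots:
  fixes r mu sig delta :: real
  assumes r: "0 < r" and sig: "0 < sig" and delta: "0 < delta" and mu: "mu \<noteq> r"
  defines "a \<equiv> m1 r mu sig delta" and "b \<equiv> m2 r mu sig delta" and "c \<equiv> (kap r mu sig)\<^sup>2 / 2"
  shows "0 < c" "1 < a" "b < 0" "r = - c * (a - 1) * (b - 1)" "delta = - c * a * b"
proof -
  show c: "0 < c" unfolding c_def kap_def using sig mu by simp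
  obtain x y where x: "1 < x" and y: "y < 0"
    and factor: "\<And>m. c * m\<^sup>2 + (delta - r - c) * m - delta = c * (m - x) * (m - y)"
    using quadratic_factor_opposite_roots[OF c delta, of "delta - r - c"] r by auto
  have root_iff: "charpoly r mu sig delta m = 0 \<longleftrightarrow> m = x \<or> m = y" for m
    using factor[of m] c unfolding charpoly_def c_def[symmetric] by simp
  have "a = x" unfolding a_def m1_def using x y root_iff by (intro the_equality) auto
  moreover have "b = y" unfolding b_def m2_def using x y root_iff by (intro the_equality) auto
  moreover have "- r = c * (1 - x) * (1 - y)" and "- delta = c * x * y"
    using factor[of 1] factor[of 0] by simp_all
  ultimately show "1 < a" "b < 0" "r = - c * (a - 1) * (b - 1)" "delta = - c * a * b"
    using x y by (simp_all add: algebra_simps)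
qed

lemma powr_minus_linear_strict_antimono:
  fixes e x y :: real
  assumes e: "1 < e" and xy: "0 < x" "x < y" "y \<le> 1"
  shows "y powr e - e * y < x powr e - e * x"
proof -
  have "(\<lambda>z. z powr e - e * z) y < (\<lambda>z. z powr e - e * z) x"
  proof (rule DERIV_neg_imp_decreasing_open[OF xy(2)])
    fix z assume z: "x < z" "z < y"
    then have "z powr (e - 1) < 1 powr (e - 1)" using xy e by (intro powr_less_mono2) auto
    then have "e * z powr (e - 1) - e * 1 < 0" using e by simp
    moreover have "((\<lambda>z. z powr e - e * z) has_real_derivative e * z powr (e - 1) - e * 1) (at z)"
      using z xy by (auto intro!: derivative_eq_intros)
    ultimately show "\<exists>D. ((\<lambda>z. z powr e - e * z) has_real_derivative D) (at z) \<and> D < 0" by blast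
  qed (use xy in \<open>auto intro!: continuous_intros\<close>)
  then show ?thesis by simp
qed

lemma powr_minus_linear_strict_mono:
  fixes e x y :: real
  assumes e: "e < 0" and xy: "1 \<le> x" "x < y"
  shows "x powr e - e * x < y powr e - e * y"
proof -
  have "(\<lambda>z. z powr e - e * z) x < (\<lambda>z. z powr e - e * z) y"
  proof (rule DERIV_pos_imp_increasing_open[OF xy(2)])
    fix z assume z: "x < z" "z < y"
    then have "z powr (e - 1) < 1" using xy e by (intro powr_less_one) auto
    then have "0 < e * z powr (e - 1) - e * 1" using e by (simp add: mult_less_cancel_left_neg)
    moreover have "((\<lambda>z. z powr e - e * z) has_real_derivative e * z powr (e - 1) - e * 1) (at z)"
      using z xy by (auto intro!: derivative_eq_intros)
    ultimately show "\<exists>D. ((\<lambda>z. z powr e - e * z) has_real_derivative D) (at z) \<and> 0 < D" by blast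
  qed (use xy in \<open>auto intro!: continuous_intros\<close>)
  then show ?thesis by simp
qed

lemma ex1_root_powr_linear_below_one:
  fixes e w :: real
  assumes e: "1 < e" and w: "0 < w" "w \<le> 1"
  shows "\<exists>!z. 0 < z \<and> z \<le> w \<and> z powr e - e * z + (e - 1) * w = 0"
proof -
  define f where "f z = z powr e - e * z + (e - 1) * w" for z
  have "f w \<le> 0"
    using powr_mono'[of 1 e w] w e unfolding f_def by (simp add: algebra_simps)
  moreover have "0 < f 0" unfolding f_def using e w by simp
  moreover have "continuous_on {0..w} f"
    unfolding f_def using e by (intro continuous_intros continuous_on_powr') auto
  ultimately obtain z where z: "0 \<le> z" "z \<le> w" "f z = 0"
    using IVT2'[of f w 0 0] w by auto
  with \<open>0 < f 0\<close> have "0 < z" by (cases "z = 0") auto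
  moreover have "y = z" if "0 < y" "y \<le> w" "f y = 0" for y
    using powr_minus_linear_strict_antimono[OF e, of y z]
      powr_minus_linear_strict_antimono[OF e, of z y] that z w \<open>0 < z\<close> unfolding f_def by (cases y z rule: linorder_cases) auto
  ultimately show ?thesis using z unfolding f_def by blast
qed

lemma ex1_root_powr_linear_above_one:
  fixes e w :: real
  assumes e: "e < 0" and w: "1 \<le> w"
  shows "\<exists>!z. w \<le> z \<and> z powr e - e * z + (e - 1) * w = 0"
proof -
  define f where "f z = z powr e - e * z + (e - 1) * w" for z
  define W where "W = (e - 1) * w / e"  \<comment> \<open>the zero of the affine part, so f W = W powr e\<close>
  have "f w \<le> 0"
    using powr_mono2'[of e 1 w] w e unfolding f_def by (simp add: algebra_simps)
  moreover have "0 \<le> f W" unfolding f_def W_def using e by simp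
  moreover have "w \<le> W" unfolding W_def using e w by (simp add: field_simps)
  moreover have "continuous_on {w..W} f"
    unfolding f_def using w by (intro continuous_intros) auto
  ultimately obtain z where z: "w \<le> z" "f z = 0"
    using IVT'[of f w 0 W] by auto
  moreover have "y = z" if "w \<le> y" "f y = 0" for y
    using powr_minus_linear_strict_mono[OF e, of y z] powr_minus_linear_strict_mono[OF e, of z y] that z w unfolding f_def by (cases y z rule: linorder_cases) auto
  ultimately show ?thesis unfolding f_def by blast
qed

lemma zal_eq_The:
  fixes r mu sig delta alpha :: real
  assumes r: "0 < r" and sig: "0 < sig" and delta: "0 < delta" and mu: "mu \<noteq> r"
  defines "a \<equiv> m1 r mu sig delta"
  shows "zal r mu sig delta alpha =
    (THE z. 0 < z \<and> z \<le> 1 - alpha * delta \<and> z powr a - a * z + (a - 1) * (1 - alpha * delta) = 0)"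
proof -
  define b where "b = m2 r mu sig delta"
  define c where "c = (kap r mu sig)\<^sup>2 / 2"
  note roots = charpoly_roots[OF r sig delta mu, folded a_def b_def c_def]
  have "2 / ((kap r mu sig)\<^sup>2 * a * (a - 1)) * z powr a + z / r * (b - 1) + b * (alpha - 1 / delta)
      = (z powr a - a * z + (a - 1) * (1 - alpha * delta)) / (c * a * (a - 1))" for z
  proof -
    have "2 / ((kap r mu sig)\<^sup>2 * a * (a - 1)) = 1 / (c * a * (a - 1))" unfolding c_def by simp
    moreover have "z / r * (b - 1) = - a * z / (c * a * (a - 1))"
      unfolding roots(4) using roots(1-3) by (simp add: divide_simps)
    moreover have "b * (alpha - 1 / delta) = (a - 1) * (1 - alpha * delta) / (c * a * (a - 1))"
      unfolding roots(5) using roots(1-3) by (simp add: divide_simps)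
    ultimately show ?thesis by (simp add: add_divide_distrib diff_divide_distrib)
  qed
  then show ?thesis
    unfolding zal_def Let_def a_def[symmetric] b_def[symmetric] using roots(1,2) by simp
qed

lemma zbe_eq_The:
  fixes r mu sig delta beta :: real
  assumes r: "0 < r" and sig: "0 < sig" and delta: "0 < delta" and mu: "mu \<noteq> r"
  defines "b \<equiv> m2 r mu sig delta"
  shows "zbe r mu sig delta beta =
    (THE z. 1 + beta * delta \<le> z \<and> z powr b - b * z + (b - 1) * (1 + beta * delta) = 0)"
proof -
  define a where "a = m1 r mu sig delta"
  define c where "c = (kap r mu sig)\<^sup>2 / 2"
  note roots = charpoly_roots[OF r sig delta mu, folded a_def b_def c_def]
  have "2 / ((kap r mu sig)\<^sup>2 * b * (b - 1)) * z powr b + z / r * (a - 1) - a * (beta + 1 / delta)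
      = (z powr b - b * z + (b - 1) * (1 + beta * delta)) / (c * b * (b - 1))" for z
  proof -
    have "2 / ((kap r mu sig)\<^sup>2 * b * (b - 1)) = 1 / (c * b * (b - 1))" unfolding c_def by simp
    moreover have "z / r * (a - 1) = - b * z / (c * b * (b - 1))"
      unfolding roots(4) using roots(1-3) by (simp add: divide_simps)
    moreover have "a * (beta + 1 / delta) = - ((b - 1) * (1 + beta * delta) / (c * b * (b - 1)))"
      unfolding roots(5) using roots(1-3) by (simp add: divide_simps)
    ultimately show ?thesis by (simp add: add_divide_distrib diff_divide_distrib)
  qed
  moreover have "c * b * (b - 1) \<noteq> 0" using roots(1-3) by simp
  ultimately show ?thesis
    unfolding zbe_def Let_def a_def[symmetric] b_def[symmetric] by simp
qed

lemma zal_bounds: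
  fixes r mu sig delta alpha :: real
  assumes r: "0 < r" and sig: "0 < sig" and delta: "0 < delta" and mu: "mu \<noteq> r"
    and alpha: "0 \<le> alpha" "alpha < 1 / delta"
  shows "0 < zal r mu sig delta alpha \<and> zal r mu sig delta alpha \<le> 1 - alpha * delta"
proof -
  have "0 < 1 - alpha * delta" "1 - alpha * delta \<le> 1"
    using alpha delta by (simp_all add: field_simps)
  from theI'[OF ex1_root_powr_linear_below_one[OF charpoly_roots(2)[OF r sig delta mu] this]]
  show ?thesis unfolding zal_eq_The[OF r sig delta mu] by simp
qed

lemma zbe_lower_bound:
  fixes r mu sig delta beta :: real
  assumes r: "0 < r" and sig: "0 < sig" and delta: "0 < delta" and mu: "mu \<noteq> r"
    and beta: "0 \<le> beta"
  shows "1 + beta * delta \<le> zbe r mu sig delta beta"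
proof -
  have "1 \<le> 1 + beta * delta" using beta delta by simp
  from theI'[OF ex1_root_powr_linear_above_one[OF charpoly_roots(3)[OF r sig delta mu] this]]
  show ?thesis unfolding zbe_eq_The[OF r sig delta mu] by simp
qed

lemma zal_zero:
  fixes r mu sig delta :: real
  assumes r: "0 < r" and sig: "0 < sig" and delta: "0 < delta" and mu: "mu \<noteq> r"
  shows "zal r mu sig delta 0 = 1"
  unfolding zal_eq_The[OF assms]
  by (rule the1_equality[OF ex1_root_powr_linear_below_one[OF charpoly_roots(2)[OF assms]]]) simp_all

lemma zbe_zero:
  fixes r mu sig delta :: real
  assumes r: "0 < r" and sig: "0 < sig" and delta: "0 < delta" and mu: "mu \<noteq> r"
  shows "zbe r mu sig delta 0 = 1"
  unfolding zbe_eq_The[OF assms]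
  by (rule the1_equality[OF ex1_root_powr_linear_above_one[OF charpoly_roots(3)[OF assms]]]) simp_all

lemma zal_tendsto_0:
  fixes r mu sig delta :: real
  assumes r: "0 < r" and sig: "0 < sig" and delta: "0 < delta" and mu: "mu \<noteq> r"
  shows "((\<lambda>alpha. zal r mu sig delta alpha) \<longlongrightarrow> 0) (at_left (1 / delta))"
proof (rule tendsto_sandwich)
  have "eventually (\<lambda>alpha. alpha \<in> {0<..<1 / delta}) (at_left (1 / delta))"
    using delta by (intro eventually_at_left_real) simp
  then have "eventually (\<lambda>alpha.
      0 < zal r mu sig delta alpha \<and> zal r mu sig delta alpha \<le> 1 - alpha * delta) (at_left (1 / delta))"
    by eventually_elim (simp add: zal_bounds[OF assms])
  then show "eventually (\<lambda>alpha. 0 \<le> zal r mu sig delta alpha) (at_left (1 / delta))"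
    and "eventually (\<lambda>alpha. zal r mu sig delta alpha \<le> 1 - alpha * delta) (at_left (1 / delta))"
    by (auto elim: eventually_mono)
  have "((\<lambda>alpha. 1 - alpha * delta) \<longlongrightarrow> 1 - 1 / delta * delta) (at_left (1 / delta))"
    by (intro tendsto_intros)
  then show "((\<lambda>alpha. 1 - alpha * delta) \<longlongrightarrow> 0) (at_left (1 / delta))"
    using delta by simp
qed simp

lemma zbe_filterlim_at_top:
  fixes r mu sig delta :: real
  assumes r: "0 < r" and sig: "0 < sig" and delta: "0 < delta" and mu: "mu \<noteq> r"
  shows "filterlim (\<lambda>beta. zbe r mu sig delta beta) at_top at_top"
proof (rule filterlim_at_top_mono)
  show "filterlim (\<lambda>beta. 1 + beta * delta) at_top at_top"
    by (intro filterlim_tendsto_add_at_top[OF tendsto_const]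
        filterlim_at_top_mult_tendsto_pos[OF tendsto_const delta] filterlim_ident)
  show "eventually (\<lambda>beta. 1 + beta * delta \<le> zbe r mu sig delta beta) at_top"
    using eventually_ge_at_top[of 0] by eventually_elim (rule zbe_lower_bound[OF assms])
qed

lemma gstar_tendsto_1: "(gstar \<longlongrightarrow> 1) at_top"
  unfolding gstar_def[abs_def] by real_asymp

lemma gstar_bounds: "1 \<le> t \<Longrightarrow> 0 \<le> gstar t \<and> gstar t < 1"
  unfolding gstar_def by (simp add: field_simps)

lemma abs_powr_scaled_le:
  fixes h u z e t :: real
  assumes h: "0 < h" and u: "0 < u" and t: "0 \<le> t"
    and hu: "(h \<le> u \<and> 0 \<le> e) \<or> (u \<le> h \<and> e \<le> 0)"
  shows "\<bar>h powr (1 + t * e) * (z * u powr (- t)) powr e\<bar> \<le> z powr e * h"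
proof -
  have "(z * u powr (- t)) powr e = z powr e * u powr (- (t * e))"
    by (simp add: powr_mult powr_powr)
  moreover have "h powr (1 + t * e) = h * h powr (t * e)" using h by (simp add: powr_add)
  moreover have "(h / u) powr (t * e) = h powr (t * e) * u powr (- (t * e))"
    using h u unfolding powr_divide powr_minus by (simp add: divide_inverse)
  ultimately have
    "h powr (1 + t * e) * (z * u powr (- t)) powr e = z powr e * h * (h / u) powr (t * e)"
    by simp
  moreover have "(h / u) powr (t * e) \<le> 1"
    using hu
  proof
    assume "h \<le> u \<and> 0 \<le> e"
    then show ?thesis using h u t by (intro powr_le1) auto
  next
    assume "u \<le> h \<and> e \<le> 0"
    then have "(h / u) powr (t * e) \<le> 1 powr (t * e)"
      using h u t by (intro powr_mono2') (auto simp: mult_nonneg_nonpos)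
    then show ?thesis by simp
  qed
  ultimately show ?thesis using h by (simp add: mult_left_le)
qed

definition curve_term :: "real \<Rightarrow> real \<Rightarrow> real \<Rightarrow> real \<Rightarrow> real \<Rightarrow> real" where
  "curve_term m z h u t =
     (1 - gstar t) / (m - gstar t) * (h powr (1 + t * (m - 1)) * (z * u powr (- t)) powr (m - 1))"

lemma curve_term_tendsto_0:
  fixes m z h u :: real
  assumes h: "0 < h" and u: "0 < u" and hu: "(h \<le> u \<and> 1 < m) \<or> (u \<le> h \<and> m < 1)"
  shows "(curve_term m z h u \<longlongrightarrow> 0) at_top"
proof (rule Lim_null_comparison)
  define \<rho> where "\<rho> t = (1 - gstar t) / (m - gstar t)" for t
  have "(\<rho> \<longlongrightarrow> (1 - 1) / (m - 1)) at_top"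
    unfolding \<rho>_def using hu by (intro tendsto_intros gstar_tendsto_1) auto
  then have "((\<lambda>t. \<bar>\<rho> t\<bar> * (z powr (m - 1) * h)) \<longlongrightarrow> \<bar>0\<bar> * (z powr (m - 1) * h)) at_top"
    by (intro tendsto_intros) simp
  then show "((\<lambda>t. \<bar>\<rho> t\<bar> * (z powr (m - 1) * h)) \<longlongrightarrow> 0) at_top" by simp
  show "eventually (\<lambda>t. norm (curve_term m z h u t) \<le> \<bar>\<rho> t\<bar> * (z powr (m - 1) * h)) at_top"
    using eventually_ge_at_top[of 0]
  proof eventually_elim
    case (elim t)
    then have "\<bar>h powr (1 + t * (m - 1)) * (z * u powr (- t)) powr (m - 1)\<bar> \<le> z powr (m - 1) * h"
      using hu by (intro abs_powr_scaled_le h u) auto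
    then show ?case unfolding curve_term_def \<rho>_def[symmetric] by (simp add: abs_mult mult_left_mono)
  qed
qed

lemma x_lavs_curve_terms:
  fixes r mu sig delta alpha beta h1 h2 :: real
  assumes r: "0 < r" and sig: "0 < sig" and delta: "0 < delta" and mu: "mu \<noteq> r"
  defines "a \<equiv> m1 r mu sig delta" and "b \<equiv> m2 r mu sig delta" and "za \<equiv> zal r mu sig delta alpha"
  shows "\<exists>P Q R. \<forall>t\<ge>1. x_lavs r mu sig delta t alpha beta h1 h2 =
    h1 / r + P * curve_term a za h2 h1 t + Q * curve_term a za h1 h1 t + R * curve_term b za h1 h1 t"
proof (intro exI allI impI)
  define k2 where "k2 = (kap r mu sig)\<^sup>2"
  define zb where "zb = zbe r mu sig delta beta"
  define K5 where "K5 = b * (beta * delta + 1) / delta * zb powr (- a) + (1 - b) / r * zb powr (1 - a)"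
  define K2 where "K2 = a * (alpha * delta - 1) / delta * za powr (- b) + (a - 1) / r * za powr (1 - b)"
  fix t :: real assume "1 \<le> t"
  moreover note roots = charpoly_roots[OF r sig delta mu, folded a_def b_def]
  ultimately have "a - gstar t \<noteq> 0" "b - gstar t \<noteq> 0" "a \<noteq> 0" "a - 1 \<noteq> 0" "a - b \<noteq> 0" "k2 \<noteq> 0"
    using gstar_bounds[of t] unfolding k2_def by auto
  with delta r show "x_lavs r mu sig delta t alpha beta h1 h2 = h1 / r
    + (2 / (k2 * (a - b) * (a - 1)) - a * K5 / (a - b)) * curve_term a za h2 h1 t
    + (- 2 / (k2 * (a - b) * (a - 1))) * curve_term a za h1 h1 t
    + (- b * K2 / (a - b)) * curve_term b za h1 h1 t"
    unfolding x_lavs_def C1_def C3_def C5_def C2_def curve_term_def Let_def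
      a_def[symmetric] b_def[symmetric] za_def[symmetric] zb_def[symmetric] k2_def[symmetric]
      K5_def K2_def
    by (simp add: divide_simps) (simp add: algebra_simps)
qed

lemma x_gloom_curve_terms:
  fixes r mu sig delta alpha beta h1 h2 :: real
  assumes r: "0 < r" and sig: "0 < sig" and delta: "0 < delta" and mu: "mu \<noteq> r"
  defines "a \<equiv> m1 r mu sig delta" and "b \<equiv> m2 r mu sig delta" and "zb \<equiv> zbe r mu sig delta beta"
  shows "\<exists>P Q R. \<forall>t\<ge>1. x_gloom r mu sig delta t alpha beta h1 h2 =
    h2 / r + P * curve_term a zb h2 h2 t + Q * curve_term b zb h1 h2 t + R * curve_term b zb h2 h2 t"
proof (intro exI allI impI)
  define k2 where "k2 = (kap r mu sig)\<^sup>2"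
  define za where "za = zal r mu sig delta alpha"
  define K5 where "K5 = b * (beta * delta + 1) / delta * zb powr (- a) + (1 - b) / r * zb powr (1 - a)"
  define K2 where "K2 = a * (alpha * delta - 1) / delta * za powr (- b) + (a - 1) / r * za powr (1 - b)"
  fix t :: real assume "1 \<le> t"
  moreover note roots = charpoly_roots[OF r sig delta mu, folded a_def b_def]
  ultimately have "a - gstar t \<noteq> 0" "b - gstar t \<noteq> 0" "b \<noteq> 0" "b - 1 \<noteq> 0" "a - b \<noteq> 0" "k2 \<noteq> 0"
    using gstar_bounds[of t] unfolding k2_def by auto
  with delta r show "x_gloom r mu sig delta t alpha beta h1 h2 = h2 / r
    + (- a * K5 / (a - b)) * curve_term a zb h2 h2 t
    + (- b * K2 / (a - b) - 2 / (k2 * (a - b) * (b - 1))) * curve_term b zb h1 h2 t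
    + 2 / (k2 * (a - b) * (b - 1)) * curve_term b zb h2 h2 t"
    unfolding x_gloom_def C6_def C4_def C5_def C2_def curve_term_def Let_def
      a_def[symmetric] b_def[symmetric] za_def[symmetric] zb_def[symmetric] k2_def[symmetric]
      K5_def K2_def
    by (simp add: divide_simps) (simp add: algebra_simps)
qed

lemma x_lavs_tendsto:
  fixes r mu sig delta alpha beta h1 h2 :: real
  assumes r: "0 < r" and sig: "0 < sig" and delta: "0 < delta" and mu: "mu \<noteq> r"
    and h: "0 < h2" "h2 \<le> h1"
  shows "((\<lambda>t. x_lavs r mu sig delta t alpha beta h1 h2) \<longlongrightarrow> h1 / r) at_top"
proof -
  define a where "a = m1 r mu sig delta"
  define b where "b = m2 r mu sig delta"
  define za where "za = zal r mu sig delta alpha"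
  obtain P Q R where eq: "\<forall>t\<ge>1. x_lavs r mu sig delta t alpha beta h1 h2 =
      h1 / r + P * curve_term a za h2 h1 t + Q * curve_term a za h1 h1 t + R * curve_term b za h1 h1 t"
    using x_lavs_curve_terms[OF r sig delta mu] unfolding a_def b_def za_def by blast
  define f where "f t = h1 / r + P * curve_term a za h2 h1 t + Q * curve_term a za h1 h1 t
      + R * curve_term b za h1 h1 t" for t
  have "1 < a" "b < 0" using charpoly_roots[OF r sig delta mu] unfolding a_def b_def by auto
  then have "(f \<longlongrightarrow> h1 / r + P * 0 + Q * 0 + R * 0) at_top"
    unfolding f_def using h by (intro tendsto_intros curve_term_tendsto_0) auto
  then have "(f \<longlongrightarrow> h1 / r) at_top" by simp
  moreover have "eventually (\<lambda>t. f t = x_lavs r mu sig delta t alpha beta h1 h2) at_top"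
    using eventually_ge_at_top[of 1] by eventually_elim (simp add: eq f_def)
  ultimately show ?thesis by (rule Lim_transform_eventually)
qed

lemma x_gloom_tendsto:
  fixes r mu sig delta alpha beta h1 h2 :: real
  assumes r: "0 < r" and sig: "0 < sig" and delta: "0 < delta" and mu: "mu \<noteq> r"
    and h: "0 < h2" "h2 \<le> h1"
  shows "((\<lambda>t. x_gloom r mu sig delta t alpha beta h1 h2) \<longlongrightarrow> h2 / r) at_top"
proof -
  define a where "a = m1 r mu sig delta"
  define b where "b = m2 r mu sig delta"
  define zb where "zb = zbe r mu sig delta beta"
  obtain P Q R where eq: "\<forall>t\<ge>1. x_gloom r mu sig delta t alpha beta h1 h2 =
      h2 / r + P * curve_term a zb h2 h2 t + Q * curve_term b zb h1 h2 t + R * curve_term b zb h2 h2 t"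
    using x_gloom_curve_terms[OF r sig delta mu] unfolding a_def b_def zb_def by blast
  define f where "f t = h2 / r + P * curve_term a zb h2 h2 t + Q * curve_term b zb h1 h2 t
      + R * curve_term b zb h2 h2 t" for t
  have "1 < a" "b < 0" using charpoly_roots[OF r sig delta mu] unfolding a_def b_def by auto
  then have "(f \<longlongrightarrow> h2 / r + P * 0 + Q * 0 + R * 0) at_top"
    unfolding f_def using h by (intro tendsto_intros curve_term_tendsto_0) auto
  then have "(f \<longlongrightarrow> h2 / r) at_top" by simp
  moreover have "eventually (\<lambda>t. f t = x_gloom r mu sig delta t alpha beta h1 h2) at_top"
    using eventually_ge_at_top[of 1] by eventually_elim (simp add: eq f_def)
  ultimately show ?thesis by (rule Lim_transform_eventually)
qed

theorem theorem4p2: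
  fixes r mu sig delta alpha beta h1 h2 :: real
  assumes r: "r > 0" and mu: "mu > 0" and sig: "sig > 0" and delta: "delta > 0"
    and kap_nz: "mu \<noteq> r"
    and alpha: "0 \<le> alpha" "alpha \<le> 1 / delta"
    and beta: "beta \<ge> 0"
    and h: "h2 > 0" "h1 \<ge> h2"
  shows
    "(zal r mu sig delta 0 = 1 \<and> zbe r mu sig delta 0 = 1 \<and>
      (\<forall>gamma. gamma > 0 \<and> gamma \<noteq> 1 \<and> K0 r mu sig delta gamma > 0 \<longrightarrow>
         x_lavs r mu sig delta gamma 0 0 h1 h2 = x_peak r mu sig delta gamma 0 0 h1 h2 \<and>
         x_gloom r mu sig delta gamma 0 0 h1 h2 = x_valy r mu sig delta gamma 0 0 h1 h2))
   \<and> ((\<lambda>a. zal r mu sig delta a) \<longlongrightarrow> 0) (at_left (1 / delta))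
   \<and> filterlim (\<lambda>b. zbe r mu sig delta b) at_top at_top
   \<and> ((\<lambda>gamma. x_lavs r mu sig delta gamma alpha beta h1 h2 / h1) \<longlongrightarrow> 1 / r) at_top
   \<and> ((\<lambda>gamma. x_gloom r mu sig delta gamma alpha beta h1 h2 / h2) \<longlongrightarrow> 1 / r) at_top"
proof (intro conjI allI impI)
  show "zal r mu sig delta 0 = 1" "zbe r mu sig delta 0 = 1"
    by (rule zal_zero[OF r sig delta kap_nz], rule zbe_zero[OF r sig delta kap_nz])
  fix gamma
  show "x_lavs r mu sig delta gamma 0 0 h1 h2 = x_peak r mu sig delta gamma 0 0 h1 h2"
    unfolding x_lavs_def x_peak_def Let_def zal_zero[OF r sig delta kap_nz] by simp
  show "x_gloom r mu sig delta gamma 0 0 h1 h2 = x_valy r mu sig delta gamma 0 0 h1 h2"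
    unfolding x_gloom_def x_valy_def Let_def zbe_zero[OF r sig delta kap_nz] by simp
next
  show "((\<lambda>a. zal r mu sig delta a) \<longlongrightarrow> 0) (at_left (1 / delta))"
    by (rule zal_tendsto_0[OF r sig delta kap_nz])
  show "filterlim (\<lambda>b. zbe r mu sig delta b) at_top at_top"
    by (rule zbe_filterlim_at_top[OF r sig delta kap_nz])
next
  have "((\<lambda>gamma. x_lavs r mu sig delta gamma alpha beta h1 h2 / h1) \<longlongrightarrow> (h1 / r) / h1) at_top"
    using h by (intro tendsto_intros x_lavs_tendsto[OF r sig delta kap_nz h]) simp
  then show "((\<lambda>gamma. x_lavs r mu sig delta gamma alpha beta h1 h2 / h1) \<longlongrightarrow> 1 / r) at_top"
    using h by simp
  have "((\<lambda>gamma. x_gloom r mu sig delta gamma alpha beta h1 h2 / h2) \<longlongrightarrow> (h2 / r) / h2) at_top"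
    using h by (intro tendsto_intros x_gloom_tendsto[OF r sig delta kap_nz h]) simp
  then show "((\<lambda>gamma. x_gloom r mu sig delta gamma alpha beta h1 h2 / h2) \<longlongrightarrow> 1 / r) at_top"
    using h by simp
qed

end
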